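(* Let $G$ be a torsion-free group, $\mathbb{F}$ a field, $\alpha$ a zero divisor in $\mathbb{F}[G]$ with $supp(\alpha)=\{1,x,y,xy\}$ where $x,y$ are distinct non-trivial elements of $G$, and let $\beta$ be a mate of $\alpha$. Then $|supp(\alpha)supp(\beta)|\le 2|supp(\beta)|-2$.
   Context: $supp(\gamma)=\{x\in G:\gamma_x\ne0\}$; for subsets $B,C\subseteq G$, $BC=\{bc:b\in B,c\in C\}$. A mate of $\alpha$ is a non-zero $\beta$ with $\alpha\beta=0$ such that $|supp(\beta)|\le|supp(\beta')|$ for every non-zero $\beta'$ with $\alpha\beta'=0$. *)

theory Defs
  imports "HOL-Algebra.Coset"
begin

text \<open>Group ring F[G]: finitely supported functions from carrier G to a field 'f.\<close>

definition supp :: "('g \<Rightarrow> 'f::zero) \<Rightarrow> 'g set" where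
  "supp a = {x. a x \<noteq> 0}"

definition grp_ring_elem :: "('g, 'b) monoid_scheme \<Rightarrow> ('g \<Rightarrow> 'f::zero) \<Rightarrow> bool" where
  "grp_ring_elem G a \<longleftrightarrow> finite (supp a) \<and> supp a \<subseteq> carrier G"

definition grp_ring_mult :: "('g, 'b) monoid_scheme \<Rightarrow> ('g \<Rightarrow> 'f::field) \<Rightarrow> ('g \<Rightarrow> 'f) \<Rightarrow> ('g \<Rightarrow> 'f)" where
  "grp_ring_mult G a b = (\<lambda>z. if z \<in> carrier G
      then (\<Sum>x\<in>supp a. a x * b (inv\<^bsub>G\<^esub> x \<otimes>\<^bsub>G\<^esub> z)) else 0)"

definition torsion_free :: "('g, 'b) monoid_scheme \<Rightarrow> bool" where
  "torsion_free G \<longleftrightarrow> (\<forall>x\<in>carrier G. x \<noteq> \<one>\<^bsub>G\<^esub> \<longrightarrow> (\<forall>n::nat. n > 0 \<longrightarrow> x [^]\<^bsub>G\<^esub> n \<noteq> \<one>\<^bsub>G\<^esub>))"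

definition zero_divisor :: "('g, 'b) monoid_scheme \<Rightarrow> ('g \<Rightarrow> 'f::field) \<Rightarrow> bool" where
  "zero_divisor G a \<longleftrightarrow> grp_ring_elem G a \<and> a \<noteq> (\<lambda>_. 0) \<and>
     (\<exists>b. grp_ring_elem G b \<and> b \<noteq> (\<lambda>_. 0) \<and>
          (grp_ring_mult G a b = (\<lambda>_. 0) \<or> grp_ring_mult G b a = (\<lambda>_. 0)))"

definition mate :: "('g, 'b) monoid_scheme \<Rightarrow> ('g \<Rightarrow> 'f::field) \<Rightarrow> ('g \<Rightarrow> 'f) \<Rightarrow> bool" where
  "mate G a b \<longleftrightarrow> grp_ring_elem G b \<and> b \<noteq> (\<lambda>_. 0) \<and> grp_ring_mult G a b = (\<lambda>_. 0) \<and>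
     (\<forall>b'. grp_ring_elem G b' \<and> b' \<noteq> (\<lambda>_. 0) \<and> grp_ring_mult G a b' = (\<lambda>_. 0)
        \<longrightarrow> card (supp b) \<le> card (supp b'))"

end

theory Submission
  imports Defs
begin

(*
  Write B = supp \<beta> and D = B \<union> yB, so that supp \<alpha> supp \<beta> = D \<union> xD and
  |D \<union> xD| = |D| + q, where q counts the x-bottoms u \<in> D (those with x\<inverse>u \<notin> D);
  there are as many x-tops t \<in> D (those with xt \<notin> D).  The coefficient of \<alpha>\<beta> = 0 at a
  bottom u, resp. at xt for a top t, involves only \<beta>(u), \<beta>(y\<inverse>u), so bottoms and tops
  lie in B \<inter> yB.  A common bottom and top would force \<alpha>(1)\<alpha>(xy) = \<alpha>(x)\<alpha>(y); then
  \<alpha> = (\<alpha>(1) + \<alpha>(x)x)(1 + \<alpha>(y)/\<alpha>(1) y), and in a torsion-free group a finite nonempty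
  set is never closed under left multiplication by a non-trivial element, so neither
  factor has a nonzero right annihilator.  Hence 2q \<le> |B \<inter> yB| = 2|B| - |D|.  Finally
  q \<ge> 2: a single bottom makes D one x-progression, so y is a power of x (as also when
  xy = 1), and an element supported on a progression s, sx, sx\<^sup>2, ... is not annihilated,
  by looking at its top term.  Altogether |supp \<alpha> supp \<beta>| = |D| + q \<le> 2|B| - q \<le> 2|B| - 2.
*)

lemma grp_ring_mult_single_term_nonzero:
  fixes a b :: "'g \<Rightarrow> 'f::field"
  assumes fin: "finite (supp a)" and s0: "s0 \<in> supp a" and g: "g \<in> carrier G"
    and b_s0: "b (inv\<^bsub>G\<^esub> s0 \<otimes>\<^bsub>G\<^esub> g) \<noteq> 0"
    and b_rest: "\<And>s. s \<in> supp a \<Longrightarrow> s \<noteq> s0 \<Longrightarrow> b (inv\<^bsub>G\<^esub> s \<otimes>\<^bsub>G\<^esub> g) = 0"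
  shows "grp_ring_mult G a b g \<noteq> 0"
proof -
  have "grp_ring_mult G a b g
      = a s0 * b (inv\<^bsub>G\<^esub> s0 \<otimes>\<^bsub>G\<^esub> g) + (\<Sum>s\<in>supp a - {s0}. a s * b (inv\<^bsub>G\<^esub> s \<otimes>\<^bsub>G\<^esub> g))"
    unfolding grp_ring_mult_def using g sum.remove[OF fin s0] by simp
  also have "(\<Sum>s\<in>supp a - {s0}. a s * b (inv\<^bsub>G\<^esub> s \<otimes>\<^bsub>G\<^esub> g)) = 0"
    using b_rest by (intro sum.neutral) auto
  finally show ?thesis using s0 b_s0 by (simp add: supp_def)
qed

context group begin

lemma torsion_free_inj_pow:
  assumes tf: "torsion_free G" and t: "t \<in> carrier G" "t \<noteq> \<one>"
  shows "inj (\<lambda>n::nat. t [^] n)"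
proof (rule linorder_injI)
  fix m n :: nat assume "m < n"
  show "t [^] m \<noteq> t [^] n"
  proof
    assume eq: "t [^] m = t [^] n"
    have "t [^] m \<otimes> t [^] (n - m) = t [^] n"
      using \<open>m < n\<close> t by (simp add: nat_pow_mult)
    with eq have "t [^] m \<otimes> \<one> = t [^] m \<otimes> t [^] (n - m)" using t by simp
    then have "t [^] (n - m) = \<one>" using t by simp
    with tf t \<open>m < n\<close> show False unfolding torsion_free_def by simp
  qed
qed

lemma torsion_free_pow_orbit_top:
  assumes tf: "torsion_free G" and t: "t \<in> carrier G" "t \<noteq> \<one>"
    and A: "finite A" and h: "h \<in> carrier G" "h \<in> A"
  obtains n :: nat where "t [^] n \<otimes> h \<in> A" and "\<And>k::nat. 0 < k \<Longrightarrow> t [^] k \<otimes> (t [^] n \<otimes> h) \<notin> A"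
proof -
  let ?orbit = "\<lambda>n::nat. t [^] n \<otimes> h"
  define M where "M = ?orbit -` A"
  have "inj ?orbit"
    using torsion_free_inj_pow[OF tf t] t h by (auto simp: inj_def)
  then have "finite M" unfolding M_def using A by (rule finite_vimageI[rotated])
  moreover have "0 \<in> M" unfolding M_def using h by simp
  ultimately have top: "Max M \<in> M" "\<And>m. m \<in> M \<Longrightarrow> m \<le> Max M" by (auto intro: Max_in)
  have beyond: "t [^] k \<otimes> ?orbit (Max M) \<notin> A" if "0 < k" for k :: nat
  proof
    assume "t [^] k \<otimes> ?orbit (Max M) \<in> A"
    then have "k + Max M \<in> M" unfolding M_def using t h by (simp add: nat_pow_mult[symmetric] m_assoc)
    with top(2) \<open>0 < k\<close> show False by force
  qed
  moreover have "?orbit (Max M) \<in> A" using top(1) unfolding M_def by simp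
  ultimately show thesis using that by blast
qed

lemma finite_lmult_closed_empty:
  assumes tf: "torsion_free G" and t: "t \<in> carrier G" "t \<noteq> \<one>"
    and A: "finite A" "A \<subseteq> carrier G" and closed: "\<And>h. h \<in> A \<Longrightarrow> t \<otimes> h \<in> A"
  shows "A = {}"
proof (rule ccontr)
  assume "A \<noteq> {}"
  then obtain h where "h \<in> A" by auto
  with A obtain n :: nat where "t [^] n \<otimes> h \<in> A" "t [^] (1::nat) \<otimes> (t [^] n \<otimes> h) \<notin> A"
    by (metis torsion_free_pow_orbit_top[OF tf t A(1)] subsetD zero_less_one)
  with closed t show False by simp
qed

lemma l_coset_mem_iff:
  "A \<subseteq> carrier G \<Longrightarrow> g \<in> carrier G \<Longrightarrow> w \<in> carrier G \<Longrightarrow> w \<in> g <# A \<longleftrightarrow> inv g \<otimes> w \<in> A"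
  unfolding l_coset_def by (auto simp: m_assoc[symmetric] subsetD) (metis inv_solve_left' inv_closed m_closed)

lemma finite_pow_orbit_of_bottom:
  assumes tf: "torsion_free G" and t: "t \<in> carrier G" "t \<noteq> \<one>"
    and D: "finite D" "D \<subseteq> carrier G" and d: "d \<in> D"
  obtains e and n :: nat where "e \<in> D - (t <# D)" and "d = t [^] n \<otimes> e"
proof -
  have it: "inv t \<in> carrier G" "inv t \<noteq> \<one>" using t by auto
  obtain n :: nat where e: "inv t [^] n \<otimes> d \<in> D" and bot: "inv t [^] (1::nat) \<otimes> (inv t [^] n \<otimes> d) \<notin> D"
    using torsion_free_pow_orbit_top[OF tf it D(1)] d D(2) by (metis subsetD zero_less_one)
  have dG: "d \<in> carrier G" using d D by auto
  have "inv t [^] n \<otimes> d \<notin> t <# D" using bot l_coset_mem_iff[OF D(2) t(1)] t dG by simp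
  moreover have "d = t [^] n \<otimes> (inv t [^] n \<otimes> d)"
    using t dG by (simp add: nat_pow_inv m_assoc[symmetric])
  ultimately show thesis using e that by blast
qed

lemma l_coset_eq_image: "g <# A = (\<lambda>h. g \<otimes> h) ` A"
  unfolding l_coset_def by auto

lemma card_l_coset: "A \<subseteq> carrier G \<Longrightarrow> g \<in> carrier G \<Longrightarrow> card (g <# A) = card A"
  unfolding l_coset_eq_image by (rule card_image) (auto simp: inj_on_def subsetD)

lemma card_Un_l_coset:
  assumes "finite A" "A \<subseteq> carrier G" "g \<in> carrier G"
  shows "card (A \<union> (g <# A)) = card A + card (A - (g <# A))"
proof -
  have "card (A \<union> (g <# A)) = card ((g <# A) \<union> (A - (g <# A)))"
    by (rule arg_cong[where f = card]) auto
  also have "\<dots> = card (g <# A) + card (A - (g <# A))"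
    using assms(1) by (intro card_Un_disjoint) (auto simp: l_coset_eq_image)
  finally show ?thesis using assms by (simp add: card_l_coset)
qed

lemma card_Diff_l_coset_inv:
  assumes A: "finite A" "A \<subseteq> carrier G" and g: "g \<in> carrier G"
  shows "card (A - (inv g <# A)) = card (A - (g <# A))"
proof -
  have gA: "g <# A \<subseteq> carrier G" using A(2) g by (rule l_coset_subset_G)
  have "inv g <# (A \<inter> (g <# A)) = (inv g <# A) \<inter> (inv g <# (g <# A))"
    unfolding l_coset_eq_image using A gA g
    by (intro inj_on_image_Int[of _ "carrier G"]) (auto simp: inj_on_def)
  also have "inv g <# (g <# A) = A" using A g by (simp add: lcos_m_assoc lcos_mult_one)
  finally have "card (A \<inter> (inv g <# A)) = card (inv g <# (A \<inter> (g <# A)))"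
    by (simp add: Int_commute)
  also have "\<dots> = card (A \<inter> (g <# A))" using A g by (intro card_l_coset) auto
  finally have "card (A \<inter> (inv g <# A)) = card (A \<inter> (g <# A))" .
  with A show ?thesis by (simp add: card_Diff_subset_Int)
qed

lemma set_mult_four_eq_l_cosets:
  assumes "B \<subseteq> carrier G" "x \<in> carrier G" "y \<in> carrier G"
  shows "{\<one>, x, y, x \<otimes> y} <#> B = (B \<union> (y <# B)) \<union> (x <# (B \<union> (y <# B)))"
  using assms unfolding set_mult_def l_coset_def by (auto simp: m_assoc subsetD)

lemma grp_ring_mult_nonzero_pow_progression:
  fixes \<alpha> \<beta> :: "'a \<Rightarrow> 'f::field"
  assumes tf: "torsion_free G" and t: "t \<in> carrier G" "t \<noteq> \<one>" and s: "s \<in> carrier G"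
    and \<alpha>: "finite (supp \<alpha>)" "supp \<alpha> \<noteq> {}" "supp \<alpha> \<subseteq> range (\<lambda>n::nat. s \<otimes> t [^] n)"
    and \<beta>: "finite (supp \<beta>)" "supp \<beta> \<subseteq> carrier G" "supp \<beta> \<noteq> {}"
  shows "\<exists>g\<in>carrier G. grp_ring_mult G \<alpha> \<beta> g \<noteq> 0"
proof -
  let ?prog = "\<lambda>n::nat. s \<otimes> t [^] n"
  define N where "N = Max (?prog -` supp \<alpha>)"
  have "inj ?prog" using torsion_free_inj_pow[OF tf t] s t by (auto simp: inj_def)
  then have fin: "finite (?prog -` supp \<alpha>)" using \<alpha>(1) by (rule finite_vimageI[rotated])
  obtain s0 where s0: "s0 \<in> supp \<alpha>" using \<alpha>(2) by auto
  with \<alpha>(3) have "s0 \<in> range ?prog" by (rule subsetD)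
  then obtain n0 where "s0 = ?prog n0" by (rule rangeE)
  with s0 have "?prog -` supp \<alpha> \<noteq> {}" by auto
  with fin have N: "?prog N \<in> supp \<alpha>" "\<And>n. ?prog n \<in> supp \<alpha> \<Longrightarrow> n \<le> N"
    unfolding N_def using Max_in Max_ge by auto
  obtain h0 where h0: "h0 \<in> supp \<beta>" using \<beta>(3) by auto
  then have "h0 \<in> carrier G" using \<beta>(2) by auto
  then obtain m :: nat where e: "t [^] m \<otimes> h0 \<in> supp \<beta>"
    and top: "\<And>k::nat. 0 < k \<Longrightarrow> t [^] k \<otimes> (t [^] m \<otimes> h0) \<notin> supp \<beta>"
    using torsion_free_pow_orbit_top[OF tf t \<beta>(1)] h0 by blast
  define e where "e = t [^] m \<otimes> h0"
  have eG: "e \<in> carrier G" using e \<beta>(2) e_def by auto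
  have shift: "inv (?prog n) \<otimes> (?prog N \<otimes> e) = t [^] (N - n) \<otimes> e" if "n \<le> N" for n
  proof -
    have "t [^] N = t [^] n \<otimes> t [^] (N - n)" using that t by (simp add: nat_pow_mult)
    then have "?prog N \<otimes> e = ?prog n \<otimes> (t [^] (N - n) \<otimes> e)"
      using s t eG by (simp add: m_assoc)
    then show ?thesis using s t eG by (simp add: inv_solve_left')
  qed
  have "grp_ring_mult G \<alpha> \<beta> (?prog N \<otimes> e) \<noteq> 0"
  proof (rule grp_ring_mult_single_term_nonzero[OF \<alpha>(1) N(1)])
    show "\<beta> (inv (?prog N) \<otimes> (?prog N \<otimes> e)) \<noteq> 0"
      using shift[of N] e e_def eG by (simp add: supp_def)
    fix s' assume s': "s' \<in> supp \<alpha>" "s' \<noteq> ?prog N"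
    from \<alpha>(3) s'(1) have "s' \<in> range ?prog" by (rule subsetD)
    then obtain n where n: "s' = ?prog n" by (rule rangeE)
    have "n \<le> N" using N(2) s'(1) n by simp
    moreover have "n \<noteq> N" using s'(2) n by auto
    ultimately have "n < N" by simp
    then show "\<beta> (inv s' \<otimes> (?prog N \<otimes> e)) = 0"
      using shift[of n] top[of "N - n"] n e_def by (simp add: supp_def)
  qed (use s t eG in simp)
  then show ?thesis using s t eG by blast
qed

lemma pow_relation_imp_pow_progression:
  assumes x: "x \<in> carrier G" and y: "y \<in> carrier G" and rel: "y \<otimes> x [^] (i::nat) = x [^] (j::nat)"
  shows "\<exists>s\<in>carrier G. {\<one>, x, y, x \<otimes> y} \<subseteq> range (\<lambda>n::nat. s \<otimes> x [^] n)"
proof (cases "i \<le> j")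
  case True
  have "x [^] j = x [^] (j - i) \<otimes> x [^] i" using True x by (simp add: nat_pow_mult)
  with rel have y_pow: "y = x [^] (j - i)" using x y by simp
  have "x \<otimes> y = \<one> \<otimes> x [^] Suc (j - i)" using x y_pow by (metis l_one nat_pow_Suc2 nat_pow_closed)
  moreover have "\<one> = \<one> \<otimes> x [^] (0::nat)" "x = \<one> \<otimes> x [^] (1::nat)" "y = \<one> \<otimes> x [^] (j - i)"
    using x y_pow by simp_all
  ultimately show ?thesis by blast
next
  case False
  define m where "m = i - j"
  have "x [^] i = x [^] m \<otimes> x [^] j" using False x by (simp add: m_def nat_pow_mult)
  with rel have "(y \<otimes> x [^] m) \<otimes> x [^] j = \<one> \<otimes> x [^] j" using x y by (simp add: m_assoc)
  then have y_inv: "y \<otimes> x [^] m = \<one>" using x y right_cancel[of "x [^] j" "y \<otimes> x [^] m" \<one>] by simp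
  have "x \<otimes> y = y \<otimes> x"
    using x y y_inv by (metis group_commutes_pow inv_comm l_inv_ex inv_equality nat_pow_closed nat_pow_inv)
  then have "\<one> = y \<otimes> x [^] m" "x = y \<otimes> x [^] Suc m" "y = y \<otimes> x [^] (0::nat)"
    "x \<otimes> y = y \<otimes> x [^] (1::nat)"
    using x y y_inv by (simp_all add: m_assoc[symmetric])
  then show ?thesis using y by blast
qed

lemma pow_relation_not_annihilating:
  fixes \<alpha> \<beta> :: "'a \<Rightarrow> 'f::field"
  assumes tf: "torsion_free G" and x: "x \<in> carrier G" "x \<noteq> \<one>" and y: "y \<in> carrier G"
    and supp_\<alpha>: "supp \<alpha> = {\<one>, x, y, x \<otimes> y}" and rel: "y \<otimes> x [^] (i::nat) = x [^] (j::nat)"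
    and \<beta>: "finite (supp \<beta>)" "supp \<beta> \<subseteq> carrier G" "supp \<beta> \<noteq> {}"
  shows "\<exists>g\<in>carrier G. grp_ring_mult G \<alpha> \<beta> g \<noteq> 0"
proof -
  obtain s where "s \<in> carrier G" "supp \<alpha> \<subseteq> range (\<lambda>n::nat. s \<otimes> x [^] n)"
    using pow_relation_imp_pow_progression[OF x(1) y rel] supp_\<alpha> by auto
  with tf x \<beta> show ?thesis
    by (intro grp_ring_mult_nonzero_pow_progression) (auto simp: supp_\<alpha>)
qed

end

locale four_term_annihilator = group G for G :: "('a, 'b) monoid_scheme" (structure) +
  fixes \<alpha> \<beta> :: "'a \<Rightarrow> 'f::field" and x y :: 'a
  assumes torsion_free: "torsion_free G"
    and x: "x \<in> carrier G" and y: "y \<in> carrier G"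
    and x_ne_one: "x \<noteq> \<one>" and y_ne_one: "y \<noteq> \<one>" and x_ne_y: "x \<noteq> y" and xy_ne_one: "x \<otimes> y \<noteq> \<one>"
    and supp_\<alpha>: "supp \<alpha> = {\<one>, x, y, x \<otimes> y}"
    and annihilates: "\<And>g. g \<in> carrier G \<Longrightarrow> grp_ring_mult G \<alpha> \<beta> g = 0"
    and finite_supp_\<beta>: "finite (supp \<beta>)" and supp_\<beta>_carrier: "supp \<beta> \<subseteq> carrier G"
    and supp_\<beta>_nonempty: "supp \<beta> \<noteq> {}"
begin

lemma coeffs_nonzero: "\<alpha> \<one> \<noteq> 0" "\<alpha> x \<noteq> 0" "\<alpha> y \<noteq> 0" "\<alpha> (x \<otimes> y) \<noteq> 0"
  using supp_\<alpha> by (auto simp: supp_def set_eq_iff)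

lemma annihilator_equation:
  assumes g: "g \<in> carrier G"
  shows "\<alpha> \<one> * \<beta> g + \<alpha> x * \<beta> (inv x \<otimes> g) + \<alpha> y * \<beta> (inv y \<otimes> g)
       + \<alpha> (x \<otimes> y) * \<beta> (inv y \<otimes> (inv x \<otimes> g)) = 0"
proof -
  have "\<one> \<noteq> x" "\<one> \<noteq> y" "\<one> \<noteq> x \<otimes> y" "x \<noteq> y" "x \<noteq> x \<otimes> y" "y \<noteq> x \<otimes> y"
    using x_ne_one y_ne_one x_ne_y xy_ne_one x y by auto
  then show ?thesis
    using annihilates[OF g] g x y unfolding grp_ring_mult_def supp_\<alpha>
    by (simp add: inv_mult_group m_assoc add.assoc)
qed

definition D :: "'a set" where "D = supp \<beta> \<union> (y <# supp \<beta>)"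
definition D_bot :: "'a set" where "D_bot = D - (x <# D)"
definition D_top :: "'a set" where "D_top = D - (inv x <# D)"

lemma finite_D: "finite D" and D_carrier: "D \<subseteq> carrier G"
  using finite_supp_\<beta> supp_\<beta>_carrier y unfolding D_def l_coset_eq_image by auto

lemma mem_D_iff: "w \<in> carrier G \<Longrightarrow> w \<in> D \<longleftrightarrow> \<beta> w \<noteq> 0 \<or> \<beta> (inv y \<otimes> w) \<noteq> 0"
  unfolding D_def using l_coset_mem_iff[OF supp_\<beta>_carrier y] by (auto simp: supp_def)

lemma D_bot_equation:
  assumes u: "u \<in> D_bot"
  shows "\<alpha> \<one> * \<beta> u + \<alpha> y * \<beta> (inv y \<otimes> u) = 0"
proof -
  have uG: "u \<in> carrier G" using u D_carrier unfolding D_bot_def by auto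
  have "inv x \<otimes> u \<notin> D" using u l_coset_mem_iff[OF D_carrier x uG] unfolding D_bot_def by auto
  then have "\<beta> (inv x \<otimes> u) = 0" "\<beta> (inv y \<otimes> (inv x \<otimes> u)) = 0" using mem_D_iff x uG by auto
  then show ?thesis using annihilator_equation[OF uG] by simp
qed

lemma D_top_equation:
  assumes t: "t \<in> D_top"
  shows "\<alpha> x * \<beta> t + \<alpha> (x \<otimes> y) * \<beta> (inv y \<otimes> t) = 0"
proof -
  have tG: "t \<in> carrier G" and xtG: "x \<otimes> t \<in> carrier G" using t D_carrier x unfolding D_top_def by auto
  have "x \<otimes> t \<notin> D" using t l_coset_mem_iff[OF D_carrier _ tG, of "inv x"] x unfolding D_top_def by auto
  then have "\<beta> (x \<otimes> t) = 0" "\<beta> (inv y \<otimes> (x \<otimes> t)) = 0" using mem_D_iff xtG by auto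
  moreover have "inv x \<otimes> (x \<otimes> t) = t" using x tG by (simp add: m_assoc[symmetric])
  ultimately show ?thesis using annihilator_equation[OF xtG] by simp
qed

lemma mem_y_coset_iff: "w \<in> carrier G \<Longrightarrow> w \<in> y <# supp \<beta> \<longleftrightarrow> \<beta> (inv y \<otimes> w) \<noteq> 0"
  using l_coset_mem_iff[OF supp_\<beta>_carrier y] by (simp add: supp_def)

lemma balanced_mem_D_imp_mem_Int:
  assumes w: "w \<in> D" and ac: "a \<noteq> 0" "c \<noteq> 0" and bal: "a * \<beta> w + c * \<beta> (inv y \<otimes> w) = 0"
  shows "w \<in> supp \<beta> \<inter> (y <# supp \<beta>)"
proof -
  have wG: "w \<in> carrier G" using w D_carrier by auto
  have "\<beta> w \<noteq> 0 \<or> \<beta> (inv y \<otimes> w) \<noteq> 0" using w mem_D_iff[OF wG] by auto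
  with ac bal have "\<beta> w \<noteq> 0" "\<beta> (inv y \<otimes> w) \<noteq> 0" by (auto simp: add_eq_0_iff)
  then show ?thesis using mem_y_coset_iff[OF wG] by (simp add: supp_def)
qed

lemma D_bot_subset: "D_bot \<subseteq> supp \<beta> \<inter> (y <# supp \<beta>)"
  using balanced_mem_D_imp_mem_Int D_bot_equation coeffs_nonzero unfolding D_bot_def by blast

lemma D_top_subset: "D_top \<subseteq> supp \<beta> \<inter> (y <# supp \<beta>)"
  using balanced_mem_D_imp_mem_Int D_top_equation coeffs_nonzero unfolding D_top_def by blast

lemma coeffs_not_factorizable: "\<alpha> \<one> * \<alpha> (x \<otimes> y) \<noteq> \<alpha> x * \<alpha> y"
proof
  assume fact: "\<alpha> \<one> * \<alpha> (x \<otimes> y) = \<alpha> x * \<alpha> y"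
  \<comment> \<open>\<gamma> is the coefficient function of (\<alpha>(1) + \<alpha>(y) y)\<beta>.\<close>
  define \<gamma> where "\<gamma> g = \<alpha> \<one> * \<beta> g + \<alpha> y * \<beta> (inv y \<otimes> g)" for g
  have \<gamma>_shift: "\<alpha> \<one> * \<gamma> (x \<otimes> h) = - \<alpha> x * \<gamma> h" if h: "h \<in> carrier G" for h
  proof -
    have "inv x \<otimes> (x \<otimes> h) = h" using x h by (simp add: m_assoc[symmetric])
    then have shift: "\<gamma> (x \<otimes> h) = - (\<alpha> x * \<beta> h + \<alpha> (x \<otimes> y) * \<beta> (inv y \<otimes> h))"
      using annihilator_equation[of "x \<otimes> h"] x h unfolding \<gamma>_def by (simp add: algebra_simps eq_neg_iff_add_eq_0)
    have "\<alpha> \<one> * (\<alpha> x * \<beta> h + \<alpha> (x \<otimes> y) * \<beta> (inv y \<otimes> h))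
        = \<alpha> x * (\<alpha> \<one> * \<beta> h) + (\<alpha> \<one> * \<alpha> (x \<otimes> y)) * \<beta> (inv y \<otimes> h)"
      by (simp add: algebra_simps)
    also have "\<dots> = \<alpha> x * \<gamma> h" unfolding fact \<gamma>_def by (simp add: algebra_simps)
    finally show ?thesis unfolding shift by (metis minus_mult_left mult_minus_right)
  qed
  have "{g \<in> carrier G. \<gamma> g \<noteq> 0} = {}"
  proof (rule finite_lmult_closed_empty[OF torsion_free x x_ne_one])
    show "finite {g \<in> carrier G. \<gamma> g \<noteq> 0}"
      using finite_D by (rule finite_subset[rotated]) (auto simp: \<gamma>_def mem_D_iff)
    fix h assume "h \<in> {g \<in> carrier G. \<gamma> g \<noteq> 0}"
    then show "x \<otimes> h \<in> {g \<in> carrier G. \<gamma> g \<noteq> 0}"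
      using \<gamma>_shift[of h] coeffs_nonzero x by auto
  qed auto
  then have "supp \<beta> = {}"
  proof (intro finite_lmult_closed_empty[OF torsion_free y y_ne_one finite_supp_\<beta> supp_\<beta>_carrier])
    fix h assume h: "h \<in> supp \<beta>"
    then have hG: "h \<in> carrier G" using supp_\<beta>_carrier by auto
    then have "\<gamma> (y \<otimes> h) = 0" using \<open>{g \<in> carrier G. \<gamma> g \<noteq> 0} = {}\<close> y by auto
    moreover have "inv y \<otimes> (y \<otimes> h) = h" using y hG by (simp add: m_assoc[symmetric])
    ultimately have "\<alpha> \<one> * \<beta> (y \<otimes> h) = - \<alpha> y * \<beta> h" unfolding \<gamma>_def by (simp add: eq_neg_iff_add_eq_0)
    then show "y \<otimes> h \<in> supp \<beta>" using h coeffs_nonzero by (auto simp: supp_def)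
  qed
  with supp_\<beta>_nonempty show False by simp
qed

lemma D_bot_D_top_disjoint: "D_bot \<inter> D_top = {}"
proof (rule ccontr)
  assume "D_bot \<inter> D_top \<noteq> {}"
  then obtain u where u: "u \<in> D_bot" "u \<in> D_top" by auto
  let ?p = "\<beta> u" and ?q = "\<beta> (inv y \<otimes> u)"
  have "?q \<noteq> 0" using u(1) D_bot_subset u mem_y_coset_iff D_carrier by (auto simp: D_bot_def)
  moreover have "(\<alpha> \<one> * \<alpha> (x \<otimes> y) - \<alpha> x * \<alpha> y) * ?q
      = \<alpha> \<one> * (\<alpha> x * ?p + \<alpha> (x \<otimes> y) * ?q) - \<alpha> x * (\<alpha> \<one> * ?p + \<alpha> y * ?q)"
    by (simp add: algebra_simps)
  ultimately show False using D_bot_equation[OF u(1)] D_top_equation[OF u(2)] coeffs_not_factorizable by simp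
qed

lemma card_D_bot_ge_two: "2 \<le> card D_bot"
proof -
  obtain h0 where h0: "h0 \<in> supp \<beta>" using supp_\<beta>_nonempty by auto
  then have h0G: "h0 \<in> carrier G" using supp_\<beta>_carrier by auto
  have "h0 \<in> D" "y \<otimes> h0 \<in> D" using h0 unfolding D_def l_coset_eq_image by auto
  then obtain u i u' j where u: "u \<in> D_bot" "h0 = x [^] (i::nat) \<otimes> u"
    and u': "u' \<in> D_bot" "y \<otimes> h0 = x [^] (j::nat) \<otimes> u'"
    using finite_pow_orbit_of_bottom[OF torsion_free x x_ne_one finite_D D_carrier]
    unfolding D_bot_def by metis
  have "u' \<noteq> u"
  proof
    assume "u' = u"
    have uG: "u \<in> carrier G" using u(1) D_carrier unfolding D_bot_def by auto
    with u u' \<open>u' = u\<close> have "(y \<otimes> x [^] i) \<otimes> u = x [^] j \<otimes> u" using x y by (simp add: m_assoc)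
    then have "y \<otimes> x [^] i = x [^] j" using x y uG by simp
    from pow_relation_not_annihilating[OF torsion_free x x_ne_one y supp_\<alpha> this finite_supp_\<beta>
        supp_\<beta>_carrier supp_\<beta>_nonempty]
    show False using annihilates by auto
  qed
  then have "2 \<le> card {u, u'}" by simp
  also have "\<dots> \<le> card D_bot" using u u' finite_D unfolding D_bot_def by (intro card_mono) auto
  finally show ?thesis .
qed

theorem card_set_mult_le: "card (supp \<alpha> <#> supp \<beta>) + 2 \<le> 2 * card (supp \<beta>)"
proof -
  let ?B = "supp \<beta>" and ?I = "supp \<beta> \<inter> (y <# supp \<beta>)"
  have "card (supp \<alpha> <#> ?B) = card D + card D_bot"
    unfolding supp_\<alpha> set_mult_four_eq_l_cosets[OF supp_\<beta>_carrier x y] D_def[symmetric] D_bot_def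
    using finite_D D_carrier x by (rule card_Un_l_coset)
  moreover have "card D = card ?B + card (?B - (y <# ?B))"
    unfolding D_def using finite_supp_\<beta> supp_\<beta>_carrier y by (rule card_Un_l_coset)
  moreover have "card (?B - (y <# ?B)) = card ?B - card ?I" and "card ?I \<le> card ?B"
    using finite_supp_\<beta> by (simp_all add: card_Diff_subset_Int card_mono)
  moreover have "card D_bot + card D_top \<le> card ?I"
  proof -
    have "card D_bot + card D_top = card (D_bot \<union> D_top)"
      using finite_D D_bot_D_top_disjoint unfolding D_bot_def D_top_def by (intro card_Un_disjoint[symmetric]) auto
    also have "\<dots> \<le> card ?I"
      using D_bot_subset D_top_subset finite_supp_\<beta> by (intro card_mono) auto
    finally show ?thesis .
  qed
  moreover have "card D_top = card D_bot"
    unfolding D_top_def D_bot_def using finite_D D_carrier x by (rule card_Diff_l_coset_inv)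
  ultimately show ?thesis using card_D_bot_ge_two by linarith
qed

end

theorem mainTheorem15:
  fixes G :: "('g, 'b) monoid_scheme" and \<alpha> \<beta> :: "'g \<Rightarrow> 'f::field" and x y :: 'g
  assumes "group G" and "torsion_free G"
    and "x \<in> carrier G" and "y \<in> carrier G"
    and "x \<noteq> \<one>\<^bsub>G\<^esub>" and "y \<noteq> \<one>\<^bsub>G\<^esub>" and "x \<noteq> y"
    and "zero_divisor G \<alpha>"
    and "supp \<alpha> = {\<one>\<^bsub>G\<^esub>, x, y, x \<otimes>\<^bsub>G\<^esub> y}"
    and "mate G \<alpha> \<beta>"
  shows "int (card (supp \<alpha> <#>\<^bsub>G\<^esub> supp \<beta>)) \<le> 2 * int (card (supp \<beta>)) - 2"
proof -
  interpret group G by fact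
  have \<beta>: "finite (supp \<beta>)" "supp \<beta> \<subseteq> carrier G" "supp \<beta> \<noteq> {}"
    and annihilates: "\<And>g. grp_ring_mult G \<alpha> \<beta> g = 0"
    using \<open>mate G \<alpha> \<beta>\<close> unfolding mate_def grp_ring_elem_def by (auto simp: supp_def fun_eq_iff)
  show ?thesis
  proof (cases "x \<otimes>\<^bsub>G\<^esub> y = \<one>\<^bsub>G\<^esub>")
    case True
    then have "y \<otimes>\<^bsub>G\<^esub> x [^]\<^bsub>G\<^esub> (1::nat) = x [^]\<^bsub>G\<^esub> (0::nat)" using assms(3,4) by (simp add: inv_comm)
    from pow_relation_not_annihilating[OF assms(2,3,5,4,9) this \<beta>] annihilates show ?thesis by simp
  next
    case False
    interpret four_term_annihilator G \<alpha> \<beta> x y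
      using assms False annihilates \<beta> by unfold_locales auto
    show ?thesis using card_set_mult_le by linarith
  qed
qed

end
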